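(* Let $p < q$ be primes with $p, q \geq 3$ and $n = pq$. Then the total graph $T(\Gamma(\mathbb{Z}_n))$ is very cost effective.
   Context: $\mathbb{Z}_n$ is the ring of residue classes modulo $n$. The zero-divisor graph $\Gamma(\mathbb{Z}_n)$ has as vertices the nonzero zero-divisors of $\mathbb{Z}_n$, two distinct vertices being adjacent iff their product is $0$. The total graph $T(G)$ of a graph $G$ has vertex set $V(G)\cup E(G)$, with two vertices adjacent iff they are adjacent vertices of $G$, adjacent edges of $G$ (sharing an endpoint), or a vertex and an edge of $G$ incident to each other. For a graph $H=(V,E)$ and $S\subseteq V$, a vertex $v\in S$ is very cost effective if $|N(v)\cap S| < |N(v)\cap (V\setminus S)|$; $S$ is very cost effective if every vertex of $S$ is. A bipartition $\{S, V\setminus S\}$ is very cost effective if both parts are very cost effective, and $H$ is very cost effective if it has a very cost effective bipartition. *)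

theory Defs
  imports "HOL-Computational_Algebra.Primes"
begin

type_synonym 'a ugraph = "'a set \<times> 'a set set"

definition verts :: "'a ugraph \<Rightarrow> 'a set" where "verts G = fst G"
definition edges :: "'a ugraph \<Rightarrow> 'a set set" where "edges G = snd G"

text \<open>Zero-divisor graph of Z_n, residues represented by 0..n-1.\<close>
definition zd_verts :: "nat \<Rightarrow> nat set" where
  "zd_verts n = {x. 0 < x \<and> x < n \<and> (\<exists>y. 0 < y \<and> y < n \<and> (x * y) mod n = 0)}"

definition zero_divisor_graph :: "nat \<Rightarrow> nat ugraph" where
  "zero_divisor_graph n =
     (zd_verts n,
      {{x, y} | x y. x \<in> zd_verts n \<and> y \<in> zd_verts n \<and> x \<noteq> y \<and> (x * y) mod n = 0})"

definition total_graph :: "'a ugraph \<Rightarrow> ('a + 'a set) ugraph" where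
  "total_graph G =
     (Inl ` verts G \<union> Inr ` edges G,
      {{Inl u, Inl v} | u v. {u, v} \<in> edges G \<and> u \<noteq> v}
      \<union> {{Inr e, Inr f} | e f. e \<in> edges G \<and> f \<in> edges G \<and> e \<noteq> f \<and> e \<inter> f \<noteq> {}}
      \<union> {{Inl v, Inr e} | v e. e \<in> edges G \<and> v \<in> e})"

definition nbhd :: "'a ugraph \<Rightarrow> 'a \<Rightarrow> 'a set" where
  "nbhd G v = {w \<in> verts G. {v, w} \<in> edges G \<and> v \<noteq> w}"

definition very_cost_effective_vertex :: "'a ugraph \<Rightarrow> 'a set \<Rightarrow> 'a \<Rightarrow> bool" where
  "very_cost_effective_vertex G S v \<longleftrightarrow>
     card (nbhd G v \<inter> S) < card (nbhd G v \<inter> (verts G - S))"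

definition very_cost_effective_set :: "'a ugraph \<Rightarrow> 'a set \<Rightarrow> bool" where
  "very_cost_effective_set G S \<longleftrightarrow> (\<forall>v\<in>S. very_cost_effective_vertex G S v)"

definition very_cost_effective_bipartition :: "'a ugraph \<Rightarrow> 'a set \<Rightarrow> bool" where
  "very_cost_effective_bipartition G S \<longleftrightarrow>
     S \<subseteq> verts G \<and> very_cost_effective_set G S \<and> very_cost_effective_set G (verts G - S)"

definition very_cost_effective_graph :: "'a ugraph \<Rightarrow> bool" where
  "very_cost_effective_graph G \<longleftrightarrow> (\<exists>S. very_cost_effective_bipartition G S)"

end

theory Submission
  imports Defs
begin

text \<open>For distinct primes \<open>p\<close> and \<open>q\<close> the zero-divisor graph of \<open>\<int>\<^sub>p\<^sub>q\<close> is the complete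
bipartite graph between the nonzero multiples \<open>A\<close> of \<open>p\<close> and \<open>B\<close> of \<open>q\<close>, and when \<open>p\<close>
and \<open>q\<close> are odd each side contains as many even as odd residues. Put into \<open>S\<close> the vertices
of \<open>A\<close> and the edges joining residues of equal parity. A vertex of \<open>A\<close> then sees all of
\<open>B\<close> outside \<open>S\<close> and its incident edges split evenly, symmetrically for \<open>B\<close>; an edge
\<open>{x, y}\<close> sees one endpoint on each side, and its adjacent edges split evenly except that
the edge itself is missing from its own side, which tips the balance.\<close>

lemma verts_total_graph: "verts (total_graph G) = Inl ` verts G \<union> Inr ` edges G"
  by (simp add: total_graph_def verts_def edges_def)

lemma total_graph_Inl_Inl_edge_iff:
  "{Inl u, Inl w} \<in> edges (total_graph G) \<longleftrightarrow> u \<noteq> w \<and> {u, w} \<in> edges G"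
  by (auto simp: total_graph_def edges_def doubleton_eq_iff insert_commute)

lemma total_graph_Inl_Inr_edge_iff:
  "{Inl u, Inr e} \<in> edges (total_graph G) \<longleftrightarrow> e \<in> edges G \<and> u \<in> e"
  by (auto simp: total_graph_def edges_def doubleton_eq_iff)

lemma total_graph_Inr_Inr_edge_iff:
  "{Inr e, Inr f} \<in> edges (total_graph G) \<longleftrightarrow> e \<in> edges G \<and> f \<in> edges G \<and> e \<noteq> f \<and> e \<inter> f \<noteq> {}"
  by (auto simp: total_graph_def edges_def doubleton_eq_iff)

lemma nbhd_total_graph_Inl:
  "nbhd (total_graph G) (Inl u) = Inl ` nbhd G u \<union> Inr ` {e \<in> edges G. u \<in> e}"
proof (rule set_eqI)
  fix z show "z \<in> nbhd (total_graph G) (Inl u) \<longleftrightarrow> z \<in> Inl ` nbhd G u \<union> Inr ` {e \<in> edges G. u \<in> e}"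
    by (cases z) (auto simp: nbhd_def verts_total_graph total_graph_Inl_Inl_edge_iff
        total_graph_Inl_Inr_edge_iff)
qed

lemma nbhd_total_graph_Inr:
  assumes "e \<in> edges G"
  shows "nbhd (total_graph G) (Inr e) = Inl ` (e \<inter> verts G) \<union> Inr ` {f \<in> edges G. f \<noteq> e \<and> f \<inter> e \<noteq> {}}"
proof (rule set_eqI)
  fix z show "z \<in> nbhd (total_graph G) (Inr e) \<longleftrightarrow> z \<in> Inl ` (e \<inter> verts G) \<union> Inr ` {f \<in> edges G. f \<noteq> e \<and> f \<inter> e \<noteq> {}}"
    using assms by (cases z) (auto simp: nbhd_def verts_total_graph total_graph_Inr_Inr_edge_iff
        total_graph_Inl_Inr_edge_iff insert_commute[of "Inr e"])
qed

definition complete_bipartite :: "'a set \<Rightarrow> 'a set \<Rightarrow> 'a ugraph" where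
  "complete_bipartite A B = (A \<union> B, {{x, y} | x y. x \<in> A \<and> y \<in> B})"

lemma verts_complete_bipartite: "verts (complete_bipartite A B) = A \<union> B"
  by (simp add: complete_bipartite_def verts_def)

lemma edges_complete_bipartite: "edges (complete_bipartite A B) = {{x, y} | x y. x \<in> A \<and> y \<in> B}"
  by (simp add: complete_bipartite_def edges_def)

context
  fixes A B :: "'a set"
  assumes disjoint: "A \<inter> B = {}"
begin

lemma nbhd_complete_bipartite_left: "u \<in> A \<Longrightarrow> nbhd (complete_bipartite A B) u = B"
  using disjoint by (auto simp: nbhd_def verts_complete_bipartite edges_complete_bipartite doubleton_eq_iff)

lemma nbhd_complete_bipartite_right: "w \<in> B \<Longrightarrow> nbhd (complete_bipartite A B) w = A"
  using disjoint by (auto simp: nbhd_def verts_complete_bipartite edges_complete_bipartite doubleton_eq_iff)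

lemma complete_bipartite_edges_at_left:
  "u \<in> A \<Longrightarrow> {e \<in> edges (complete_bipartite A B). u \<in> e} = (\<lambda>y. {u, y}) ` B"
  using disjoint by (auto simp: edges_complete_bipartite)

lemma complete_bipartite_edges_at_right:
  "w \<in> B \<Longrightarrow> {e \<in> edges (complete_bipartite A B). w \<in> e} = (\<lambda>x. {x, w}) ` A"
  using disjoint by (auto simp: edges_complete_bipartite)

lemma complete_bipartite_edges_meeting:
  assumes "x \<in> A" "y \<in> B"
  shows "{f \<in> edges (complete_bipartite A B). f \<noteq> {x, y} \<and> f \<inter> {x, y} \<noteq> {}}
    = (\<lambda>y'. {x, y'}) ` (B - {y}) \<union> (\<lambda>x'. {x', y}) ` (A - {x})"
  using assms disjoint by (auto simp: edges_complete_bipartite doubleton_eq_iff)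

end

lemma card_Inl_Inr_Int:
  fixes X :: "'a set" and Y :: "'b set"
  assumes "finite X" "finite Y"
  shows "card ((Inl ` X \<union> Inr ` Y) \<inter> P) = card {x \<in> X. Inl x \<in> P} + card {y \<in> Y. Inr y \<in> P}"
proof -
  have "(Inl ` X \<union> Inr ` Y) \<inter> P = Inl ` {x \<in> X. Inl x \<in> P} \<union> Inr ` {y \<in> Y. Inr y \<in> P}"
    by auto
  also have "card \<dots> = card (Inl ` {x \<in> X. Inl x \<in> P} :: ('a + 'b) set) + card (Inr ` {y \<in> Y. Inr y \<in> P} :: ('a + 'b) set)"
    using assms by (intro card_Un_disjoint) auto
  finally show ?thesis
    by (simp add: card_image)
qed

lemma card_filter_image:
  assumes "inj_on g Y"
  shows "card {e \<in> g ` Y. Q e} = card {y \<in> Y. Q (g y)}"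
proof -
  have "{e \<in> g ` Y. Q e} = g ` {y \<in> Y. Q (g y)}" by auto
  then show ?thesis
    using assms by (simp add: card_image inj_on_subset)
qed

lemma card_filter_Diff_singleton:
  assumes "finite X" "y \<in> X"
  shows "card {z \<in> X - {y}. Q z} = card {z \<in> X. Q z} - (if Q y then 1 else 0)"
proof -
  have "{z \<in> X - {y}. Q z} = {z \<in> X. Q z} - {y}" by auto
  then show ?thesis
    using assms by (simp add: card_Diff_singleton_if)
qed

lemma card_colour_class_balanced:
  assumes "finite X" and balanced: "card {x \<in> X. c x} = card {x \<in> X. \<not> c x}"
  shows "card {x \<in> X. c x = t} = card X div 2"
proof -
  have "card X = card ({x \<in> X. c x} \<union> {x \<in> X. \<not> c x})"
    by (rule arg_cong[where f = card]) auto
  also have "\<dots> = card {x \<in> X. c x} + card {x \<in> X. \<not> c x}"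
    using \<open>finite X\<close> by (intro card_Un_disjoint) auto
  finally have "card X = card {x \<in> X. c x} + card {x \<in> X. \<not> c x}" .
  then show ?thesis
    using balanced by (cases t) auto
qed

locale balanced_bipartite =
  fixes A B :: "'a set" and c :: "'a \<Rightarrow> bool"
  assumes finite_A: "finite A" and finite_B: "finite B" and disjoint: "A \<inter> B = {}"
    and nonempty_A: "A \<noteq> {}" and nonempty_B: "B \<noteq> {}"
    and balanced_A: "card {x \<in> A. c x} = card {x \<in> A. \<not> c x}"
    and balanced_B: "card {x \<in> B. c x} = card {x \<in> B. \<not> c x}"
begin

abbreviation T :: "('a + 'a set) ugraph" where
  "T \<equiv> total_graph (complete_bipartite A B)"

definition S :: "('a + 'a set) set" where
  "S = Inl ` A \<union> Inr ` {{x, y} | x y. x \<in> A \<and> y \<in> B \<and> c x = c y}"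

lemma Inl_in_S_iff: "Inl v \<in> S \<longleftrightarrow> v \<in> A"
  by (auto simp: S_def)

lemma Inr_in_S_iff:
  assumes "x \<in> A" "y \<in> B"
  shows "Inr {x, y} \<in> S \<longleftrightarrow> c x = c y"
proof
  assume "Inr {x, y} \<in> S"
  then obtain a b where "{x, y} = {a, b}" "a \<in> A" "b \<in> B" "c a = c b"
    by (auto simp: S_def)
  with assms disjoint show "c x = c y"
    by (auto simp: doubleton_eq_iff)
next
  assume "c x = c y"
  with assms show "Inr {x, y} \<in> S"
    by (auto simp: S_def)
qed

lemma card_class_A: "card {x \<in> A. c x = t} = card A div 2"
  using card_colour_class_balanced[OF finite_A balanced_A] .

lemma card_class_B: "card {x \<in> B. c x = t} = card B div 2"
  using card_colour_class_balanced[OF finite_B balanced_B] .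

lemma half_card_A_pos: "card A div 2 \<ge> 1"
proof -
  obtain x where "x \<in> A" using nonempty_A by blast
  then have "card {z \<in> A. c z = c x} > 0"
    using finite_A by (auto simp: card_gt_0_iff)
  then show ?thesis
    using card_class_A[of "c x"] by simp
qed

lemma half_card_B_pos: "card B div 2 \<ge> 1"
proof -
  obtain x where "x \<in> B" using nonempty_B by blast
  then have "card {z \<in> B. c z = c x} > 0"
    using finite_B by (auto simp: card_gt_0_iff)
  then show ?thesis
    using card_class_B[of "c x"] by simp
qed

lemma card_nbhd_left:
  assumes "u \<in> A"
  shows "card (nbhd T (Inl u) \<inter> P) = card {w \<in> B. Inl w \<in> P} + card {y \<in> B. Inr {u, y} \<in> P}"
proof -
  have "inj_on (\<lambda>y. {u, y}) B"
    using assms disjoint by (auto simp: inj_on_def doubleton_eq_iff)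
  then show ?thesis
    using assms disjoint finite_B
    by (simp add: nbhd_total_graph_Inl nbhd_complete_bipartite_left
        complete_bipartite_edges_at_left card_Inl_Inr_Int card_filter_image)
qed

lemma card_nbhd_right:
  assumes "w \<in> B"
  shows "card (nbhd T (Inl w) \<inter> P) = card {x \<in> A. Inl x \<in> P} + card {x \<in> A. Inr {x, w} \<in> P}"
proof -
  have "inj_on (\<lambda>x. {x, w}) A"
    using assms disjoint by (auto simp: inj_on_def doubleton_eq_iff)
  then show ?thesis
    using assms disjoint finite_A
    by (simp add: nbhd_total_graph_Inl nbhd_complete_bipartite_right
        complete_bipartite_edges_at_right card_Inl_Inr_Int card_filter_image)
qed

lemma card_nbhd_edge:
  assumes x: "x \<in> A" and y: "y \<in> B"
  shows "card (nbhd T (Inr {x, y}) \<inter> P) = card {v \<in> {x, y}. Inl v \<in> P}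
    + card {y' \<in> B - {y}. Inr {x, y'} \<in> P} + card {x' \<in> A - {x}. Inr {x', y} \<in> P}"
proof -
  let ?E\<^sub>x = "(\<lambda>y'. {x, y'}) ` (B - {y})" and ?E\<^sub>y = "(\<lambda>x'. {x', y}) ` (A - {x})"
  have "{x, y} \<in> edges (complete_bipartite A B)"
    using x y by (auto simp: edges_complete_bipartite)
  moreover have "{x, y} \<inter> verts (complete_bipartite A B) = {x, y}"
    using x y by (auto simp: verts_complete_bipartite)
  ultimately have "nbhd T (Inr {x, y}) = Inl ` {x, y} \<union> Inr ` (?E\<^sub>x \<union> ?E\<^sub>y)"
    by (simp only: nbhd_total_graph_Inr complete_bipartite_edges_meeting[OF disjoint x y])
  then have "card (nbhd T (Inr {x, y}) \<inter> P)
      = card {v \<in> {x, y}. Inl v \<in> P} + card {e \<in> ?E\<^sub>x \<union> ?E\<^sub>y. Inr e \<in> P}"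
    using finite_A finite_B by (simp only: card_Inl_Inr_Int finite.insertI finite.emptyI
        finite_Un finite_imageI finite_Diff)
  also have "{e \<in> ?E\<^sub>x \<union> ?E\<^sub>y. Inr e \<in> P} = {e \<in> ?E\<^sub>x. Inr e \<in> P} \<union> {e \<in> ?E\<^sub>y. Inr e \<in> P}"
    by auto
  also have "card \<dots> = card {e \<in> ?E\<^sub>x. Inr e \<in> P} + card {e \<in> ?E\<^sub>y. Inr e \<in> P}"
    using x y disjoint finite_A finite_B by (intro card_Un_disjoint) (auto simp: doubleton_eq_iff)
  also have "card {e \<in> ?E\<^sub>x. Inr e \<in> P} = card {y' \<in> B - {y}. Inr {x, y'} \<in> P}"
    using x disjoint by (intro card_filter_image) (auto simp: inj_on_def doubleton_eq_iff)
  also have "card {e \<in> ?E\<^sub>y. Inr e \<in> P} = card {x' \<in> A - {x}. Inr {x', y} \<in> P}"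
    using y disjoint by (intro card_filter_image) (auto simp: inj_on_def doubleton_eq_iff)
  finally show ?thesis by simp
qed

lemma card_nbhd_left_S_less:
  assumes "u \<in> A"
  shows "card (nbhd T (Inl u) \<inter> S) < card (nbhd T (Inl u) \<inter> - S)"
proof -
  have vS: "{w \<in> B. Inl w \<in> S} = {}" and vN: "{w \<in> B. Inl w \<in> - S} = B"
    using disjoint by (auto simp: Inl_in_S_iff)
  have eS: "{y \<in> B. Inr {u, y} \<in> S} = {y \<in> B. c y = c u}"
    and eN: "{y \<in> B. Inr {u, y} \<in> - S} = {y \<in> B. c y = (\<not> c u)}"
    using assms Inr_in_S_iff by auto
  show ?thesis
    unfolding card_nbhd_left[OF assms] vS vN eS eN card_class_B
    using half_card_B_pos by simp
qed

lemma card_nbhd_right_complement_less: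
  assumes "w \<in> B"
  shows "card (nbhd T (Inl w) \<inter> - S) < card (nbhd T (Inl w) \<inter> S)"
proof -
  have vS: "{x \<in> A. Inl x \<in> S} = A" and vN: "{x \<in> A. Inl x \<in> - S} = {}"
    by (auto simp: Inl_in_S_iff)
  have eS: "{x \<in> A. Inr {x, w} \<in> S} = {x \<in> A. c x = c w}"
    and eN: "{x \<in> A. Inr {x, w} \<in> - S} = {x \<in> A. c x = (\<not> c w)}"
    using assms Inr_in_S_iff by auto
  show ?thesis
    unfolding card_nbhd_right[OF assms] vS vN eS eN card_class_A
    using half_card_A_pos by simp
qed

lemma card_nbhd_edge_S:
  assumes x: "x \<in> A" and y: "y \<in> B"
  shows "card (nbhd T (Inr {x, y}) \<inter> S)
    = 1 + (card B div 2 - (if c x = c y then 1 else 0)) + (card A div 2 - (if c x = c y then 1 else 0))"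
proof -
  have v: "{v \<in> {x, y}. Inl v \<in> S} = {x}"
    using x y disjoint by (auto simp: Inl_in_S_iff)
  have e\<^sub>x: "{y' \<in> B - {y}. Inr {x, y'} \<in> S} = {y' \<in> B - {y}. c y' = c x}"
    and e\<^sub>y: "{x' \<in> A - {x}. Inr {x', y} \<in> S} = {x' \<in> A - {x}. c x' = c y}"
    by (auto simp: Inr_in_S_iff[OF x] Inr_in_S_iff[OF _ y])
  show ?thesis
    unfolding card_nbhd_edge[OF x y] v e\<^sub>x e\<^sub>y card_filter_Diff_singleton[OF finite_B y]
      card_filter_Diff_singleton[OF finite_A x] card_class_A card_class_B
    by (cases "c x"; cases "c y") simp_all
qed

lemma card_nbhd_edge_complement:
  assumes x: "x \<in> A" and y: "y \<in> B"
  shows "card (nbhd T (Inr {x, y}) \<inter> - S)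
    = 1 + (card B div 2 - (if c x = c y then 0 else 1)) + (card A div 2 - (if c x = c y then 0 else 1))"
proof -
  have v: "{v \<in> {x, y}. Inl v \<in> - S} = {y}"
    using x y disjoint by (auto simp: Inl_in_S_iff)
  have e\<^sub>x: "{y' \<in> B - {y}. Inr {x, y'} \<in> - S} = {y' \<in> B - {y}. c y' = (\<not> c x)}"
    and e\<^sub>y: "{x' \<in> A - {x}. Inr {x', y} \<in> - S} = {x' \<in> A - {x}. c x' = (\<not> c y)}"
    by (auto simp: Inr_in_S_iff[OF x] Inr_in_S_iff[OF _ y])
  show ?thesis
    unfolding card_nbhd_edge[OF x y] v e\<^sub>x e\<^sub>y card_filter_Diff_singleton[OF finite_B y]
      card_filter_Diff_singleton[OF finite_A x] card_class_A card_class_B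
    by (cases "c x"; cases "c y") simp_all
qed

lemma total_vertex_cases:
  assumes "v \<in> verts T"
  obtains (left) u where "v = Inl u" "u \<in> A"
    | (right) w where "v = Inl w" "w \<in> B"
    | (edge) x y where "v = Inr {x, y}" "x \<in> A" "y \<in> B"
  using assms by (auto simp: verts_total_graph verts_complete_bipartite edges_complete_bipartite)

lemma S_subset_verts: "S \<subseteq> verts T"
  by (auto simp: S_def verts_total_graph verts_complete_bipartite edges_complete_bipartite)

lemma card_nbhd_S_less:
  assumes "v \<in> S"
  shows "card (nbhd T v \<inter> S) < card (nbhd T v \<inter> - S)"
proof -
  have "v \<in> verts T"
    using assms S_subset_verts by blast
  then show ?thesis
  proof (cases v rule: total_vertex_cases)
    case (right w)
    then show ?thesis
      using assms disjoint by (auto simp: Inl_in_S_iff)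
  next
    case (edge x y)
    then have "c x = c y"
      using assms Inr_in_S_iff by simp
    then show ?thesis
      using edge half_card_A_pos half_card_B_pos
      by (simp add: card_nbhd_edge_S card_nbhd_edge_complement)
  qed (use card_nbhd_left_S_less in auto)
qed

lemma card_nbhd_complement_less:
  assumes "v \<in> verts T" "v \<notin> S"
  shows "card (nbhd T v \<inter> - S) < card (nbhd T v \<inter> S)"
  using assms(1)
proof (cases v rule: total_vertex_cases)
  case (left u)
  then show ?thesis
    using assms(2) by (simp add: Inl_in_S_iff)
next
  case (edge x y)
  then have "c x \<noteq> c y"
    using assms(2) Inr_in_S_iff by simp
  then show ?thesis
    using edge half_card_A_pos half_card_B_pos
    by (simp add: card_nbhd_edge_S card_nbhd_edge_complement)
qed (use card_nbhd_right_complement_less in auto)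

lemma S_very_cost_effective_bipartition: "very_cost_effective_bipartition T S"
proof -
  have "nbhd T v \<inter> (verts T - S) = nbhd T v \<inter> - S" for v
    by (auto simp: nbhd_def)
  moreover have "verts T - (verts T - S) = S"
    using S_subset_verts by blast
  ultimately show ?thesis
    unfolding very_cost_effective_bipartition_def very_cost_effective_set_def
      very_cost_effective_vertex_def
    using S_subset_verts card_nbhd_S_less card_nbhd_complement_less by simp
qed

end

lemma total_graph_complete_bipartite_very_cost_effective:
  assumes "balanced_bipartite A B c"
  shows "very_cost_effective_graph (total_graph (complete_bipartite A B))"
  using balanced_bipartite.S_very_cost_effective_bipartition[OF assms]
  unfolding very_cost_effective_graph_def by blast

definition nonzero_multiples :: "nat \<Rightarrow> nat \<Rightarrow> nat set" where
  "nonzero_multiples n p = {x. 0 < x \<and> x < n \<and> p dvd x}"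

lemma nonzero_multiples_prime_product:
  assumes "0 < p"
  shows "nonzero_multiples (p * q) p = (\<lambda>k. k * p) ` {1..<q}"
proof (rule set_eqI)
  fix x
  show "x \<in> nonzero_multiples (p * q) p \<longleftrightarrow> x \<in> (\<lambda>k. k * p) ` {1..<q}"
  proof
    assume "x \<in> nonzero_multiples (p * q) p"
    then obtain k where "x = k * p" "0 < x" "x < p * q"
      by (auto simp: nonzero_multiples_def mult.commute elim!: dvdE)
    with assms show "x \<in> (\<lambda>k. k * p) ` {1..<q}"
      by (auto simp: mult.commute)
  qed (use assms in \<open>auto simp: nonzero_multiples_def mult.commute\<close>)
qed

context
  fixes p q :: nat
  assumes p: "prime p" and q: "prime q" and distinct: "p \<noteq> q"
begin

lemma prime_product_dvd_iff: "p * q dvd m \<longleftrightarrow> p dvd m \<and> q dvd m"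
  using p q distinct primes_coprime divides_mult dvd_mult_left dvd_mult_right by metis

lemma not_both_dvd_below_prime_product:
  assumes "0 < x" "x < p * q"
  shows "\<not> (p dvd x \<and> q dvd x)"
  using assms prime_product_dvd_iff[of x] by (auto dest: dvd_imp_le)

lemma zd_verts_prime_product:
  "zd_verts (p * q) = nonzero_multiples (p * q) p \<union> nonzero_multiples (p * q) q"
proof (rule set_eqI)
  fix x
  show "x \<in> zd_verts (p * q) \<longleftrightarrow> x \<in> nonzero_multiples (p * q) p \<union> nonzero_multiples (p * q) q"
  proof
    assume "x \<in> zd_verts (p * q)"
    then obtain y where x: "0 < x" "x < p * q" and y: "0 < y" "y < p * q" and "p * q dvd x * y"
      by (auto simp: zd_verts_def)
    then have "(p dvd x \<or> p dvd y) \<and> (q dvd x \<or> q dvd y)"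
      using p q by (simp add: prime_product_dvd_iff prime_dvd_mult_iff)
    then have "p dvd x \<or> q dvd x"
      using not_both_dvd_below_prime_product[OF y] by blast
    with x show "x \<in> nonzero_multiples (p * q) p \<union> nonzero_multiples (p * q) q"
      by (auto simp: nonzero_multiples_def)
  next
    have "1 < p" "1 < q"
      using p q prime_gt_1_nat by blast+
    then have "p < p * q" "q < p * q"
      by simp_all
    moreover assume "x \<in> nonzero_multiples (p * q) p \<union> nonzero_multiples (p * q) q"
    ultimately consider "0 < x" "x < p * q" "p dvd x" "0 < q" "q < p * q"
      | "0 < x" "x < p * q" "q dvd x" "0 < p" "p < p * q"
      by (auto simp: nonzero_multiples_def)
    then show "x \<in> zd_verts (p * q)"
    proof cases
      case 1
      then show ?thesis
        unfolding zd_verts_def by (auto intro!: exI[of _ q] simp: mult_dvd_mono)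
    next
      case 2
      then show ?thesis
        unfolding zd_verts_def by (auto intro!: exI[of _ p] simp: mult_dvd_mono mult.commute[of p q])
    qed
  qed
qed

lemma nonzero_multiples_prime_product_disjoint:
  "nonzero_multiples (p * q) p \<inter> nonzero_multiples (p * q) q = {}"
  using not_both_dvd_below_prime_product by (auto simp: nonzero_multiples_def)

lemma nonzero_multiples_adjacent_iff:
  assumes x: "x \<in> nonzero_multiples (p * q) p \<union> nonzero_multiples (p * q) q"
    and y: "y \<in> nonzero_multiples (p * q) p \<union> nonzero_multiples (p * q) q"
  shows "x \<noteq> y \<and> (x * y) mod (p * q) = 0
    \<longleftrightarrow> (x \<in> nonzero_multiples (p * q) p \<and> y \<in> nonzero_multiples (p * q) q)
      \<or> (x \<in> nonzero_multiples (p * q) q \<and> y \<in> nonzero_multiples (p * q) p)"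
proof -
  have divides: "z \<in> nonzero_multiples (p * q) p \<longleftrightarrow> p dvd z" "z \<in> nonzero_multiples (p * q) q \<longleftrightarrow> q dvd z"
    and not_both: "\<not> (p dvd z \<and> q dvd z)"
    if "z \<in> nonzero_multiples (p * q) p \<union> nonzero_multiples (p * q) q" for z
    using that not_both_dvd_below_prime_product by (auto simp: nonzero_multiples_def)
  have "(x * y) mod (p * q) = 0 \<longleftrightarrow> (p dvd x \<or> p dvd y) \<and> (q dvd x \<or> q dvd y)"
    using p q by (simp add: mod_eq_0_iff_dvd prime_product_dvd_iff prime_dvd_mult_iff)
  then show ?thesis
    unfolding divides[OF x] divides[OF y]
    using not_both[OF x] not_both[OF y] by auto
qed

lemma zero_divisor_graph_prime_product:
  "zero_divisor_graph (p * q)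
    = complete_bipartite (nonzero_multiples (p * q) p) (nonzero_multiples (p * q) q)"
proof -
  let ?A = "nonzero_multiples (p * q) p" and ?B = "nonzero_multiples (p * q) q"
  have "{{x, y} | x y. x \<in> zd_verts (p * q) \<and> y \<in> zd_verts (p * q) \<and> x \<noteq> y \<and> (x * y) mod (p * q) = 0}
      = {{x, y} | x y. x \<in> ?A \<and> y \<in> ?B}" (is "?L = ?R")
  proof
    show "?L \<subseteq> ?R"
    proof
      fix e
      assume "e \<in> ?L"
      then obtain x y where e: "e = {x, y}" and x: "x \<in> ?A \<union> ?B" and y: "y \<in> ?A \<union> ?B"
        and xy: "x \<noteq> y \<and> (x * y) mod (p * q) = 0"
        unfolding zd_verts_prime_product mem_Collect_eq by (elim exE conjE) simp
      from xy consider "x \<in> ?A" "y \<in> ?B" | "y \<in> ?A" "x \<in> ?B"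
        unfolding nonzero_multiples_adjacent_iff[OF x y] by blast
      then show "e \<in> ?R"
      proof cases
        case 1
        then show ?thesis
          unfolding e by blast
      next
        case 2
        then show ?thesis
          unfolding e insert_commute[of x] by blast
      qed
    qed
    show "?R \<subseteq> ?L"
      unfolding zd_verts_prime_product using nonzero_multiples_adjacent_iff by blast
  qed
  then show ?thesis
    by (simp add: zero_divisor_graph_def complete_bipartite_def zd_verts_prime_product)
qed

end

lemma card_even_eq_card_odd_below_odd:
  fixes q :: nat
  assumes "odd q"
  shows "card {k \<in> {1..<q}. even k} = card {k \<in> {1..<q}. odd k}"
proof -
  have "{k \<in> {1..<q}. even k} = Suc ` {k \<in> {1..<q}. odd k}"
  proof (rule set_eqI)
    fix j
    show "j \<in> {k \<in> {1..<q}. even k} \<longleftrightarrow> j \<in> Suc ` {k \<in> {1..<q}. odd k}"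
    proof
      assume "j \<in> {k \<in> {1..<q}. even k}"
      then have "j = Suc (j - 1)" "j - 1 \<in> {k \<in> {1..<q}. odd k}"
        by (auto elim!: evenE)
      then show "j \<in> Suc ` {k \<in> {1..<q}. odd k}"
        by blast
    next
      assume "j \<in> Suc ` {k \<in> {1..<q}. odd k}"
      then obtain k where "j = Suc k" "1 \<le> k" "k < q" "odd k"
        by auto
      moreover have "Suc k \<noteq> q"
        using \<open>odd k\<close> assms by auto
      ultimately show "j \<in> {k \<in> {1..<q}. even k}"
        by auto
    qed
  qed
  then show ?thesis
    by (simp add: card_image)
qed

lemma nonzero_multiples_parity_balanced:
  fixes p q :: nat
  assumes "odd p" "odd q"
  shows "card {x \<in> nonzero_multiples (p * q) p. even x} = card {x \<in> nonzero_multiples (p * q) p. \<not> even x}"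
proof -
  have "inj_on (\<lambda>k. k * p) {1..<q}"
    using assms by (auto simp: inj_on_def)
  then show ?thesis
    using assms card_even_eq_card_odd_below_odd[OF \<open>odd q\<close>]
    by (simp add: nonzero_multiples_prime_product odd_pos card_filter_image)
qed

lemma nonzero_multiples_balanced_bipartite:
  fixes p q :: nat
  assumes p: "prime p" and q: "prime q" and "odd p" "odd q" "p \<noteq> q"
  shows "balanced_bipartite (nonzero_multiples (p * q) p) (nonzero_multiples (p * q) q) even"
proof
  show "finite (nonzero_multiples (p * q) p)" "finite (nonzero_multiples (p * q) q)"
    by (auto simp: nonzero_multiples_def)
  show "nonzero_multiples (p * q) p \<inter> nonzero_multiples (p * q) q = {}"
    using nonzero_multiples_prime_product_disjoint p q \<open>p \<noteq> q\<close> .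
  have "1 < p" "1 < q"
    using p q prime_gt_1_nat by blast+
  then have "p \<in> nonzero_multiples (p * q) p" "q \<in> nonzero_multiples (p * q) q"
    by (auto simp: nonzero_multiples_def)
  then show "nonzero_multiples (p * q) p \<noteq> {}" "nonzero_multiples (p * q) q \<noteq> {}"
    by blast+
  show "card {x \<in> nonzero_multiples (p * q) p. even x} = card {x \<in> nonzero_multiples (p * q) p. \<not> even x}"
    using nonzero_multiples_parity_balanced \<open>odd p\<close> \<open>odd q\<close> .
  show "card {x \<in> nonzero_multiples (p * q) q. even x} = card {x \<in> nonzero_multiples (p * q) q. \<not> even x}"
    using nonzero_multiples_parity_balanced[of q p] \<open>odd p\<close> \<open>odd q\<close> by (simp add: mult.commute)
qed

theorem mainTheorem9:
  fixes p q :: nat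
  assumes "prime p" and "prime q" and "3 \<le> p" and "3 \<le> q" and "p < q"
  shows "very_cost_effective_graph (total_graph (zero_divisor_graph (p * q)))"
proof -
  have "odd p" "odd q"
    using assms prime_odd_nat by auto
  then have "balanced_bipartite (nonzero_multiples (p * q) p) (nonzero_multiples (p * q) q) even"
    using assms by (intro nonzero_multiples_balanced_bipartite) auto
  then show ?thesis
    unfolding zero_divisor_graph_prime_product[OF \<open>prime p\<close> \<open>prime q\<close> less_imp_neq[OF \<open>p < q\<close>]]
    by (rule total_graph_complete_bipartite_very_cost_effective)
qed

end
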